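(* Let $s$ be a sequence of positive integers. If $L_1,L_2\subseteq S_s$ are zig-zag languages, then $L_1\cap L_2$ and $L_1\cup L_2$ are zig-zag languages.
   Context: For a sequence $s=(s_1,\dots,s_m)$ of positive integers, an $s$-word is a word with exactly $s_i$ copies of $i$ for each $i\in[m]$; $S_s$ is the set of $s$-words. Parent operation: $p(s)=(s_1,\dots,s_{m-1},s_m-1)$ if $s_m>1$ and $p(s)=(s_1,\dots,s_{m-1})$ if $s_m=1$; for an $s$-word $w$, $p(w)$ deletes the rightmost copy of $m$; $p(L)=\{p(w):w\in L\}$. Zig-zag language (recursive on $n=\sum s_i$): for the empty sequence the only zig-zag language is $\{\varepsilon\}$. For $n\ge1$, $L\subseteq S_s$ is zig-zag if $p(L)$ is a zig-zag language of $p(s)$-words and for every $w'\in p(L)$ both of the following lie in $L$: (a) $w'm$, and (b) $mw'$ if $s_m=1$, or, if $s_m>1$, the word obtained by inserting $m$ immediately next to the rightmost $m$ of $w'$. *)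

theory Defs
  imports Main
begin

text \<open>Sequences s = (s_1,...,s_m) are lists of naturals (s_i = s ! (i-1));
words are lists of naturals over the alphabet {1..m}.\<close>

definition swords :: "nat list \<Rightarrow> nat list set" where
  "swords s = {w. set w \<subseteq> {1..length s} \<and>
                  (\<forall>i\<in>{1..length s}. count_list w i = s ! (i - 1))}"

definition pseq :: "nat list \<Rightarrow> nat list" where
  "pseq s = (if last s \<le> 1 then butlast s else butlast s @ [last s - 1])"

definition pword :: "nat \<Rightarrow> nat list \<Rightarrow> nat list" where
  "pword m w = rev (remove1 m (rev w))"

fun dup_first :: "nat \<Rightarrow> nat list \<Rightarrow> nat list" where
  "dup_first m [] = []"
| "dup_first m (x # xs) = (if x = m then m # x # xs else x # dup_first m xs)"

definition ins_next :: "nat \<Rightarrow> nat list \<Rightarrow> nat list" where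
  "ins_next m w = rev (dup_first m (rev w))"

function zigzag :: "nat list \<Rightarrow> nat list set \<Rightarrow> bool" where
  "zigzag s L =
     (if s = [] then L = {[]}
      else (let m = length s; P = pword m ` L in
              L \<subseteq> swords s \<and> zigzag (pseq s) P \<and>
              (\<forall>w'\<in>P. w' @ [m] \<in> L \<and>
                 (if last s = 1 then m # w' \<in> L else ins_next m w' \<in> L))))"
  by pat_completeness auto
termination
  apply (relation "measure (\<lambda>(s, L). sum_list s + length s)")
   apply simp
  subgoal for s L
    apply (cases s rule: rev_cases)
     apply (auto simp: pseq_def)
    done
  done

end

theory Submission
  imports Defs
begin

text \<open>Both operations commute with taking parents: for unions trivially, and for intersections
because every parent w' of a word in a zig-zag language L has its child w' m in L, so a common
parent of L1 and L2 is the parent of the common word w' m. Both closure conditions on children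
are then inherited, and induction along the parent chain of s finishes the proof.\<close>

declare zigzag.simps [simp del] \<comment> \<open>unconditional, so the simplifier would unfold it forever\<close>

definition children :: "nat list \<Rightarrow> nat list \<Rightarrow> nat list set" where
  "children s w' =
     {w' @ [length s], if last s = 1 then length s # w' else ins_next (length s) w'}"

lemma zigzag_Nil: "zigzag [] L \<longleftrightarrow> L = {[]}"
  by (subst zigzag.simps) simp

lemma zigzag_nonempty_iff:
  assumes "s \<noteq> []"
  shows "zigzag s L \<longleftrightarrow>
           L \<subseteq> swords s \<and> zigzag (pseq s) (pword (length s) ` L) \<and>
           (\<forall>w'\<in>pword (length s) ` L. children s w' \<subseteq> L)"
  using assms by (subst zigzag.simps) (auto simp: Let_def children_def)

lemma pseq_size_less: "s \<noteq> [] \<Longrightarrow> sum_list (pseq s) + length (pseq s) < sum_list s + length s"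
  by (cases s rule: rev_cases) (auto simp: pseq_def)

lemma pseq_induct [case_names Nil pseq]:
  assumes "P []" and "\<And>s. s \<noteq> [] \<Longrightarrow> P (pseq s) \<Longrightarrow> P s"
  shows "P s"
proof (induction s rule: measure_induct_rule[of "\<lambda>s. sum_list s + length s"])
  case (less s)
  show ?case
  proof (cases "s = []")
    case False
    then show ?thesis by (rule assms(2)) (rule less.IH[OF pseq_size_less[OF False]])
  qed (simp add: assms(1))
qed

lemma pword_snoc: "pword m (w @ [m]) = w"
  by (simp add: pword_def)

lemma pword_image_Int:
  assumes "\<forall>w\<in>pword m ` L1. w @ [m] \<in> L1" and "\<forall>w\<in>pword m ` L2. w @ [m] \<in> L2"
  shows "pword m ` (L1 \<inter> L2) = pword m ` L1 \<inter> pword m ` L2"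
proof
  show "pword m ` L1 \<inter> pword m ` L2 \<subseteq> pword m ` (L1 \<inter> L2)"
  proof
    fix w assume "w \<in> pword m ` L1 \<inter> pword m ` L2"
    with assms have "w @ [m] \<in> L1 \<inter> L2" by blast
    then show "w \<in> pword m ` (L1 \<inter> L2)"
      by (metis image_eqI pword_snoc)
  qed
qed blast

lemma zigzag_Int_Un:
  "zigzag s L1 \<Longrightarrow> zigzag s L2 \<Longrightarrow> zigzag s (L1 \<inter> L2) \<and> zigzag s (L1 \<union> L2)"
proof (induction s arbitrary: L1 L2 rule: pseq_induct)
  case Nil
  then show ?case by (simp add: zigzag_Nil)
next
  case (pseq s)
  define m where "m = length s"
  have L1: "L1 \<subseteq> swords s" "zigzag (pseq s) (pword m ` L1)"
    "\<forall>w'\<in>pword m ` L1. children s w' \<subseteq> L1"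
    using pseq.prems(1) zigzag_nonempty_iff[OF pseq.hyps] by (simp_all add: m_def)
  have L2: "L2 \<subseteq> swords s" "zigzag (pseq s) (pword m ` L2)"
    "\<forall>w'\<in>pword m ` L2. children s w' \<subseteq> L2"
    using pseq.prems(2) zigzag_nonempty_iff[OF pseq.hyps] by (simp_all add: m_def)
  have parents_Int: "pword m ` (L1 \<inter> L2) = pword m ` L1 \<inter> pword m ` L2"
    using L1(3) L2(3) by (intro pword_image_Int) (auto simp: children_def m_def)
  have parents_Un: "pword m ` (L1 \<union> L2) = pword m ` L1 \<union> pword m ` L2"
    by (rule image_Un)
  have "zigzag (pseq s) (pword m ` L1 \<inter> pword m ` L2)"
    and "zigzag (pseq s) (pword m ` L1 \<union> pword m ` L2)"
    using pseq.IH[OF L1(2) L2(2)] by simp_all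
  then have "zigzag s (L1 \<inter> L2)" and "zigzag s (L1 \<union> L2)"
    unfolding zigzag_nonempty_iff[OF pseq.hyps] m_def[symmetric] parents_Int parents_Un
    using L1 L2 by blast+
  then show ?case ..
qed

theorem mainTheorem5:
  fixes s :: "nat list" and L1 L2 :: "nat list set"
  assumes "\<forall>i\<in>set s. 0 < i"
    and "zigzag s L1" and "zigzag s L2"
  shows "zigzag s (L1 \<inter> L2) \<and> zigzag s (L1 \<union> L2)"
  using zigzag_Int_Un assms(2,3) by blast

end
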